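(* Let $p_0,p_1,p_2$ be positive integers with $\gcd(p_0,p_1,p_2)=1$, and put $n=p_0+p_1+p_2$. Let $E=(\mathbb{Z}/n\mathbb{Z})\times\{0,1,2\}$ and define permutations $\sigma_0,\sigma_1$ of $E$ by $$\sigma_0(m,0)=(m,1),\quad \sigma_0(m,1)=(m,2),\quad \sigma_0(m,2)=(m,0),$$ $$\sigma_1(m,0)=(m-p_1,2),\quad \sigma_1(m,1)=(m-p_2,0),\quad \sigma_1(m,2)=(m-p_0,1),$$ with arithmetic in the first coordinate modulo $n$. Let $N=\langle\sigma_0\sigma_1,\sigma_1\sigma_0\rangle$ and $H=\langle\sigma_0\rangle$. Then $N\cap H=\{\mathrm{id}\}$.
   Context: These $\sigma_0,\sigma_1$ are the monodromy permutations of the dessin drawn on the rational billiards surface of the triangle with angles $(p_0\pi/n,p_1\pi/n,p_2\pi/n)$, acting on its $3n$ edges labeled $(m,i)$. Products are composition of functions. *)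

theory Defs
  imports "HOL-Algebra.Algebra"
begin

text \<open>Edges (m,i) with m in Z/nZ represented by {0..<n}, i in {0,1,2}.\<close>
definition edges :: "nat \<Rightarrow> (nat \<times> nat) set" where
  "edges n = {0..<n} \<times> {0..<3}"

definition sigma0 :: "nat \<Rightarrow> nat \<Rightarrow> nat \<Rightarrow> (nat \<times> nat) \<Rightarrow> (nat \<times> nat)" where
  "sigma0 p0 p1 p2 = (\<lambda>e \<in> edges (p0+p1+p2).
     (case e of (m, i) \<Rightarrow> (m, (i + 1) mod 3)))"

definition sigma1 :: "nat \<Rightarrow> nat \<Rightarrow> nat \<Rightarrow> (nat \<times> nat) \<Rightarrow> (nat \<times> nat)" where
  "sigma1 p0 p1 p2 = (let n = p0+p1+p2 in (\<lambda>e \<in> edges n.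
     (case e of (m, i) \<Rightarrow>
        if i = 0 then (nat ((int m - int p1) mod int n), 2)
        else if i = 1 then (nat ((int m - int p2) mod int n), 0)
        else (nat ((int m - int p0) mod int n), 1))))"

end

theory Submission
  imports Defs
begin

(* Along the edges of the dessin, \<sigma>\<^sub>0 rotates the level i \<in> {0,1,2} by one and keeps m, while
   \<sigma>\<^sub>1 moves the level by two, so both products \<sigma>\<^sub>0\<sigma>\<^sub>1 and \<sigma>\<^sub>1\<sigma>\<^sub>0 preserve every level and
   hence so does all of N.  On the other hand H consists of the level rotations (m, i) \<mapsto>
   (m, (i + k) mod 3).  A rotation fixing the level of a single edge has k \<equiv> 0 (mod 3) and is the
   identity. *)

lemma Bij_eqI: "f \<in> Bij S \<Longrightarrow> h \<in> Bij S \<Longrightarrow> (\<And>x. x \<in> S \<Longrightarrow> f x = h x) \<Longrightarrow> f = h"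
  by (metis Bij_imp_extensional extensionalityI)

lemma Bij_mem: "f \<in> Bij S \<Longrightarrow> x \<in> S \<Longrightarrow> f x \<in> S"
  using Bij_imp_funcset by blast

lemma BijGroup_mult_Bij: "f \<in> Bij S \<Longrightarrow> h \<in> Bij S \<Longrightarrow> f \<otimes>\<^bsub>BijGroup S\<^esub> h \<in> Bij S"
  by (simp add: BijGroup_def compose_Bij)

lemma BijGroup_mult_apply:
  "f \<in> Bij S \<Longrightarrow> h \<in> Bij S \<Longrightarrow> x \<in> S \<Longrightarrow> (f \<otimes>\<^bsub>BijGroup S\<^esub> h) x = f (h x)"
  by (simp add: BijGroup_def compose_def)

lemma Bij_of_inj_on_finite:
  assumes "finite S" "f \<in> extensional S" "f ` S \<subseteq> S" "inj_on f S"
  shows "f \<in> Bij S"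
  using assms endo_inj_surj[OF assms(1,3,4)] by (simp add: Bij_def bij_betw_def)

definition fibre_preserving :: "'a set \<Rightarrow> ('a \<Rightarrow> 'b) \<Rightarrow> ('a \<Rightarrow> 'a) set" where
  "fibre_preserving S g = {f \<in> Bij S. \<forall>x\<in>S. g (f x) = g x}"

lemma BijGroup_mult_fibre_preserving:
  assumes "f \<in> Bij S" "h \<in> Bij S" "\<And>x. x \<in> S \<Longrightarrow> g (f (h x)) = g x"
  shows "f \<otimes>\<^bsub>BijGroup S\<^esub> h \<in> fibre_preserving S g"
  using assms by (simp add: fibre_preserving_def BijGroup_mult_Bij BijGroup_mult_apply)

lemma subgroup_fibre_preserving: "subgroup (fibre_preserving S g) (BijGroup S)"
proof (rule subgroup.intro)
  show "fibre_preserving S g \<subseteq> carrier (BijGroup S)"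
    by (auto simp: fibre_preserving_def BijGroup_def)
  show "\<one>\<^bsub>BijGroup S\<^esub> \<in> fibre_preserving S g"
    by (simp add: fibre_preserving_def BijGroup_def id_Bij)
  fix f h
  assume f: "f \<in> fibre_preserving S g" and "h \<in> fibre_preserving S g"
  then show "f \<otimes>\<^bsub>BijGroup S\<^esub> h \<in> fibre_preserving S g"
    by (intro BijGroup_mult_fibre_preserving) (auto simp: fibre_preserving_def Bij_mem)
  from f have fB: "f \<in> Bij S" and fg: "\<forall>x\<in>S. g (f x) = g x"
    by (simp_all add: fibre_preserving_def)
  have "g (inv_into S f x) = g x" if "x \<in> S" for x
  proof -
    have "x \<in> f ` S" using fB that by (simp add: Bij_def bij_betw_def)
    then have "f (inv_into S f x) = x" by (rule f_inv_into_f)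
    with fg Bij_inv_into_mem[OF fB that] show ?thesis by metis
  qed
  then show "inv\<^bsub>BijGroup S\<^esub> f \<in> fibre_preserving S g"
    by (simp add: fibre_preserving_def inv_BijGroup[OF fB] restrict_inv_into_Bij[OF fB])
qed

definition shift :: "'a set \<Rightarrow> nat \<Rightarrow> nat \<Rightarrow> 'a \<times> nat \<Rightarrow> 'a \<times> nat" where
  "shift A d k = (\<lambda>e \<in> A \<times> {0..<d}. (fst e, (snd e + k) mod d))"

lemma shift_apply: "e \<in> A \<times> {0..<d} \<Longrightarrow> shift A d k e = (fst e, (snd e + k) mod d)"
  by (simp add: shift_def)

lemma shift_mem: "e \<in> A \<times> {0..<d} \<Longrightarrow> shift A d k e \<in> A \<times> {0..<d}"
  by (auto simp: shift_apply mem_Times_iff)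

lemma shift_shift_apply:
  assumes "e \<in> A \<times> {0..<d}"
  shows "shift A d j (shift A d k e) = shift A d (j + k) e"
proof -
  have "((snd e + k) mod d + j) mod d = (snd e + (j + k)) mod d"
    by (metis add.assoc add.commute mod_add_left_eq)
  then show ?thesis
    using assms shift_mem[OF assms] by (simp add: shift_apply)
qed

lemma shift_multiple_apply: "e \<in> A \<times> {0..<d} \<Longrightarrow> shift A d (d * k) e = e"
  by (auto simp: shift_apply mem_Times_iff)

lemma shift_inverse_apply:
  assumes "e \<in> A \<times> {0..<d}"
  shows "shift A d ((d - 1) * k) (shift A d k e) = e"
    and "shift A d k (shift A d ((d - 1) * k) e) = e"
proof -
  from assms have "0 < d" by auto
  then have "(d - 1) * k + k = d * k" by (cases d) simp_all
  then show "shift A d ((d - 1) * k) (shift A d k e) = e"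
    and "shift A d k (shift A d ((d - 1) * k) e) = e"
    using assms by (simp_all add: shift_shift_apply shift_multiple_apply add.commute)
qed

lemma shift_Bij: "shift A d k \<in> Bij (A \<times> {0..<d})"
proof -
  have "bij_betw (shift A d k) (A \<times> {0..<d}) (A \<times> {0..<d})"
    by (rule bij_betw_byWitness[where f' = "shift A d ((d - 1) * k)"])
       (blast intro: shift_inverse_apply shift_mem)+
  then show ?thesis
    by (simp add: Bij_def shift_def)
qed

lemma shift_mult:
  "shift A d j \<otimes>\<^bsub>BijGroup (A \<times> {0..<d})\<^esub> shift A d k = shift A d (j + k)"
  by (rule Bij_eqI[where S = "A \<times> {0..<d}"])
     (simp_all add: BijGroup_mult_Bij shift_Bij BijGroup_mult_apply shift_shift_apply)

lemma shift_multiple: "shift A d (d * k) = \<one>\<^bsub>BijGroup (A \<times> {0..<d})\<^esub>"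
  by (rule Bij_eqI[where S = "A \<times> {0..<d}"])
     (simp_all add: shift_Bij BijGroup_def id_Bij shift_multiple_apply)

lemma shift_inverse:
  "shift A d ((d - 1) * k) \<otimes>\<^bsub>BijGroup (A \<times> {0..<d})\<^esub> shift A d k
    = \<one>\<^bsub>BijGroup (A \<times> {0..<d})\<^esub>"
proof (rule Bij_eqI[where S = "A \<times> {0..<d}"])
  fix e
  assume "e \<in> A \<times> {0..<d}"
  then show "(shift A d ((d - 1) * k) \<otimes>\<^bsub>BijGroup (A \<times> {0..<d})\<^esub> shift A d k) e
      = \<one>\<^bsub>BijGroup (A \<times> {0..<d})\<^esub> e"
    using shift_inverse_apply(1)[of e A d k]
    by (simp add: BijGroup_mult_apply shift_Bij, simp add: BijGroup_def)
qed (simp_all add: BijGroup_mult_Bij shift_Bij, simp add: BijGroup_def id_Bij)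

lemma subgroup_shifts: "subgroup (range (shift A d)) (BijGroup (A \<times> {0..<d}))"
proof (rule subgroup.intro)
  interpret G: group "BijGroup (A \<times> {0..<d})" by (rule group_BijGroup)
  show "range (shift A d) \<subseteq> carrier (BijGroup (A \<times> {0..<d}))"
    by (auto simp: BijGroup_def shift_Bij)
  show "\<one>\<^bsub>BijGroup (A \<times> {0..<d})\<^esub> \<in> range (shift A d)"
    by (metis rangeI shift_multiple)
  show "f \<otimes>\<^bsub>BijGroup (A \<times> {0..<d})\<^esub> h \<in> range (shift A d)"
    if "f \<in> range (shift A d)" "h \<in> range (shift A d)" for f h
    using that by (auto simp: shift_mult)
  fix f
  assume "f \<in> range (shift A d)"
  then obtain k where k: "f = shift A d k" by blast
  have "inv\<^bsub>BijGroup (A \<times> {0..<d})\<^esub> f = shift A d ((d - 1) * k)"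
    using shift_inverse[of A d k] by (intro G.inv_equality) (simp_all add: k BijGroup_def shift_Bij)
  then show "inv\<^bsub>BijGroup (A \<times> {0..<d})\<^esub> f \<in> range (shift A d)" by simp
qed

lemma shift_fibre_preserving_eq_one:
  assumes "shift A d k \<in> fibre_preserving (A \<times> {0..<d}) snd" and "a \<in> A" and "0 < d"
  shows "shift A d k = \<one>\<^bsub>BijGroup (A \<times> {0..<d})\<^esub>"
proof -
  have "(a, 0) \<in> A \<times> {0..<d}" using assms(2,3) by simp
  with assms(1) have "snd (shift A d k (a, 0)) = 0"
    by (simp add: fibre_preserving_def)
  then have "k mod d = 0" using \<open>(a, 0) \<in> A \<times> {0..<d}\<close> by (simp add: shift_apply)
  then have "k = d * (k div d)" using mult_div_mod_eq[of d k] by simp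
  then show ?thesis by (metis shift_multiple)
qed

lemma edges_eq_Times: "edges n = {0..<n} \<times> {0..<3}"
  by (simp add: edges_def)

lemma sigma0_eq_shift: "sigma0 p0 p1 p2 = shift {0..<p0+p1+p2} 3 1"
  by (simp add: sigma0_def shift_def edges_eq_Times case_prod_beta)

definition sigma1_offset :: "nat \<Rightarrow> nat \<Rightarrow> nat \<Rightarrow> nat \<Rightarrow> nat" where
  "sigma1_offset p0 p1 p2 i = (if i = 0 then p1 else if i = 1 then p2 else p0)"

lemma sigma1_apply:
  assumes "(m, i) \<in> edges (p0+p1+p2)"
  shows "sigma1 p0 p1 p2 (m, i) =
    (nat ((int m - int (sigma1_offset p0 p1 p2 i)) mod int (p0+p1+p2)), (i + 2) mod 3)"
  using assms by (auto simp: sigma1_def sigma1_offset_def edges_def Let_def) presburger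

lemma nat_mod_diff_cancel:
  fixes m m' n :: nat and q :: int
  assumes "m < n" "m' < n" "nat ((int m - q) mod int n) = nat ((int m' - q) mod int n)"
  shows "m = m'"
proof -
  have "(int m - q) mod int n = (int m' - q) mod int n"
    using assms by (simp add: eq_nat_nat_iff)
  then have "int m mod int n = int m' mod int n"
    by (metis diff_add_cancel mod_add_left_eq)
  with assms(1,2) show ?thesis by simp
qed

lemma sigma1_Bij: "sigma1 p0 p1 p2 \<in> Bij (edges (p0+p1+p2))"
proof (rule Bij_of_inj_on_finite)
  show "finite (edges (p0+p1+p2))" by (simp add: edges_def)
  show "sigma1 p0 p1 p2 \<in> extensional (edges (p0+p1+p2))" by (simp add: sigma1_def Let_def)
  show "sigma1 p0 p1 p2 ` edges (p0+p1+p2) \<subseteq> edges (p0+p1+p2)"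
    by (auto simp: sigma1_apply) (auto simp: edges_def nat_less_iff)
  show "inj_on (sigma1 p0 p1 p2) (edges (p0+p1+p2))"
  proof (rule inj_onI, clarify)
    fix m i m' i'
    assume e: "(m, i) \<in> edges (p0+p1+p2)" "(m', i') \<in> edges (p0+p1+p2)"
      and eq: "sigma1 p0 p1 p2 (m, i) = sigma1 p0 p1 p2 (m', i')"
    then have "(i + 2) mod 3 = (i' + 2) mod 3" "i < 3" "i' < 3"
      by (simp_all add: sigma1_apply edges_def)
    then have "i = i'" by presburger
    with e eq show "m = m' \<and> i = i'"
      by (auto simp: sigma1_apply edges_def intro: nat_mod_diff_cancel)
  qed
qed

lemma snd_sigma1: "e \<in> edges (p0+p1+p2) \<Longrightarrow> snd (sigma1 p0 p1 p2 e) = (snd e + 2) mod 3"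
  by (cases e) (simp add: sigma1_apply)

lemma level_rotate_back:
  fixes i :: nat
  assumes "i < 3"
  shows "((i + 2) mod 3 + 1) mod 3 = i" and "((i + 1) mod 3 + 2) mod 3 = i"
  using assms by presburger+

lemma sigma_products_level_preserving:
  fixes p0 p1 p2 :: nat
  defines "S \<equiv> edges (p0+p1+p2)"
  shows "sigma0 p0 p1 p2 \<otimes>\<^bsub>BijGroup S\<^esub> sigma1 p0 p1 p2 \<in> fibre_preserving S snd"
    and "sigma1 p0 p1 p2 \<otimes>\<^bsub>BijGroup S\<^esub> sigma0 p0 p1 p2 \<in> fibre_preserving S snd"
proof -
  have s0: "sigma0 p0 p1 p2 \<in> Bij S" and s1: "sigma1 p0 p1 p2 \<in> Bij S"
    using shift_Bij sigma1_Bij by (simp_all add: S_def sigma0_eq_shift edges_eq_Times)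
  have snd_sigma0: "snd (sigma0 p0 p1 p2 e) = (snd e + 1) mod 3" if "e \<in> S" for e
    using that by (simp add: S_def sigma0_eq_shift shift_apply edges_eq_Times)
  have level_sigma01: "snd (sigma0 p0 p1 p2 (sigma1 p0 p1 p2 e)) = snd e"
    and level_sigma10: "snd (sigma1 p0 p1 p2 (sigma0 p0 p1 p2 e)) = snd e" if e: "e \<in> S" for e
  proof -
    have "snd e < 3" using e by (simp add: S_def edges_eq_Times mem_Times_iff)
    have "snd (sigma0 p0 p1 p2 (sigma1 p0 p1 p2 e)) = (snd (sigma1 p0 p1 p2 e) + 1) mod 3"
      by (rule snd_sigma0[OF Bij_mem[OF s1 e]])
    also have "\<dots> = ((snd e + 2) mod 3 + 1) mod 3"
      using e by (simp only: S_def snd_sigma1)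
    also have "\<dots> = snd e"
      using \<open>snd e < 3\<close> by (rule level_rotate_back)
    finally show "snd (sigma0 p0 p1 p2 (sigma1 p0 p1 p2 e)) = snd e" .
    have "snd (sigma1 p0 p1 p2 (sigma0 p0 p1 p2 e)) = (snd (sigma0 p0 p1 p2 e) + 2) mod 3"
      using Bij_mem[OF s0 e] by (simp only: S_def snd_sigma1)
    also have "\<dots> = ((snd e + 1) mod 3 + 2) mod 3"
      by (simp only: snd_sigma0[OF e])
    also have "\<dots> = snd e"
      using \<open>snd e < 3\<close> by (rule level_rotate_back)
    finally show "snd (sigma1 p0 p1 p2 (sigma0 p0 p1 p2 e)) = snd e" .
  qed
  show "sigma0 p0 p1 p2 \<otimes>\<^bsub>BijGroup S\<^esub> sigma1 p0 p1 p2 \<in> fibre_preserving S snd"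
    using s0 s1 level_sigma01 by (rule BijGroup_mult_fibre_preserving)
  show "sigma1 p0 p1 p2 \<otimes>\<^bsub>BijGroup S\<^esub> sigma0 p0 p1 p2 \<in> fibre_preserving S snd"
    using s1 s0 level_sigma10 by (rule BijGroup_mult_fibre_preserving)
qed

theorem lemma5:
  fixes p0 p1 p2 :: nat
  assumes "0 < p0" and "0 < p1" and "0 < p2"
    and "gcd p0 (gcd p1 p2) = 1"
  shows "generate (BijGroup (edges (p0+p1+p2)))
            {sigma0 p0 p1 p2 \<otimes>\<^bsub>BijGroup (edges (p0+p1+p2))\<^esub> sigma1 p0 p1 p2,
             sigma1 p0 p1 p2 \<otimes>\<^bsub>BijGroup (edges (p0+p1+p2))\<^esub> sigma0 p0 p1 p2}
         \<inter> generate (BijGroup (edges (p0+p1+p2))) {sigma0 p0 p1 p2}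
         = {\<one>\<^bsub>BijGroup (edges (p0+p1+p2))\<^esub>}"
proof -
  define A where "A = {0..<p0+p1+p2}"
  interpret G: group "BijGroup (A \<times> {0..<3})" by (rule group_BijGroup)
  have N: "generate (BijGroup (A \<times> {0..<3}))
            {sigma0 p0 p1 p2 \<otimes>\<^bsub>BijGroup (A \<times> {0..<3})\<^esub> sigma1 p0 p1 p2,
             sigma1 p0 p1 p2 \<otimes>\<^bsub>BijGroup (A \<times> {0..<3})\<^esub> sigma0 p0 p1 p2}
           \<subseteq> fibre_preserving (A \<times> {0..<3}) snd"
    using sigma_products_level_preserving[of p0 p1 p2]
    by (intro G.generate_subgroup_incl subgroup_fibre_preserving) (simp add: A_def edges_eq_Times)
  have H: "generate (BijGroup (A \<times> {0..<3})) {sigma0 p0 p1 p2} \<subseteq> range (shift A 3)"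
    by (intro G.generate_subgroup_incl subgroup_shifts) (simp add: A_def sigma0_eq_shift)
  have "0 \<in> A" using assms(1) by (simp add: A_def)
  then show ?thesis
    using N H shift_fibre_preserving_eq_one[of A 3 _ 0]
    by (auto simp: A_def edges_eq_Times intro: generate.one)
qed

end
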